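(* Consider a Pandora's box problem with sequential inspection. Let $(\mathcal{C},\mathcal{P},y)$ be any state in which stopping is not an optimal action, and suppose that a closed box $i\in\mathcal{C}$ satisfies $\sigma_i^F>\sigma_i^P$ and that $\sigma_i^F$ is the largest opening threshold in that state, i.e. $$\sigma_i^F=\max\Big\{\max_{j\in\mathcal{C}}\max\{\sigma_j^F,\sigma_j^P\},\ \max_{j\in\mathcal{P}}\sigma_j^{F\mid t_j}\Big\}.$$ Then there exists an optimal policy that F-opens box $i$ immediately.
   Context: Pandora's box problem with sequential inspection: there are $N$ independent boxes. Box $i$ has a type $T_i$ taking values in a finite set $\Gamma_i$ and a nonnegative prize $V_i$, with a known joint distribution of $(V_i,T_i)$; different boxes are independent. A closed box $i$ can be F-opened (fully opened) at cost $c_i^F$, which reveals $V_i$, or P-opened (partially opened) at cost $c_i^P$, which reveals only $T_i$; a partially opened box can later be F-opened at an additional cost $c_i^F$. At any time the decision maker may stop and collect the largest prize among the F-opened boxes (or the initial value $y$). The objective is to maximize the expected collected prize minus the total inspection costs. A state is $(\mathcal{C},\mathcal{P},y)$ where $\mathcal{C}$ is the set of closed boxes, $\mathcal{P}$ is the set of partially opened boxes together with their revealed types $t_j$, and $y$ is the largest prize found so far. Thresholds: $\sigma_i^F$ solves $\mathbb{E}[(V_i-\sigma)^+]=c_i^F$; $\sigma_i^{F\mid t}$ solves $\mathbb{E}[(V_i-\sigma)^+\mid T_i=t]=c_i^F$; $\sigma_i^P$ solves $\mathbb{E}\big[\max\{0,-c_i^F+\mathbb{E}[(V_i-\sigma)^+\mid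 T_i]\}\big]=c_i^P$. The opening thresholds of a state are $\sigma_j^F,\sigma_j^P$ for $j\in\mathcal{C}$ and $\sigma_j^{F\mid t_j}$ for $j\in\mathcal{P}$. *)

theory Defs
  imports "HOL-Probability.Probability"
begin

text \<open>Box b has a type distribution Q b (a pmf on types; its support is the finite set Gamma_b)
  and, for every type t, a conditional prize distribution K b t (a probability measure on the
  reals).  The joint law of (V_b, T_b) is the mixture of K b t over t drawn from Q b.
  cF b and cP b are the F- and P-opening costs.
  A state is (C, P, y): C the closed boxes, P a partial map sending every partially opened
  box to its revealed type, y the best prize found so far.\<close>

text \<open>Bellman recursion with explicit fuel n (each action consumes fuel).\<close>
fun pb_W :: "('b \<Rightarrow> 't pmf) \<Rightarrow> ('b \<Rightarrow> 't \<Rightarrow> real measure) \<Rightarrow> ('b \<Rightarrow> real) \<Rightarrow> ('b \<Rightarrow> real)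
             \<Rightarrow> nat \<Rightarrow> 'b set \<Rightarrow> ('b \<rightharpoonup> 't) \<Rightarrow> real \<Rightarrow> real" where
  "pb_W Q K cF cP 0 C P y = y"
| "pb_W Q K cF cP (Suc n) C P y =
     Max ({y}
       \<union> (\<lambda>i. - cF i + (\<integral>t. (\<integral>v. pb_W Q K cF cP n (C - {i}) P (max y v) \<partial>K i t) \<partial>measure_pmf (Q i))) ` C
       \<union> (\<lambda>i. - cP i + (\<integral>t. pb_W Q K cF cP n (C - {i}) (P(i \<mapsto> t)) y \<partial>measure_pmf (Q i))) ` C
       \<union> (\<lambda>j. - cF j + (\<integral>v. pb_W Q K cF cP n C (P(j := None)) (max y v) \<partial>K j (the (P j)))) ` dom P)"

text \<open>Optimal expected payoff (prize minus costs) from state (C, P, y): the recursion run with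
  exactly enough fuel to exhaust all boxes (F-opening a closed box = 2 units, P-opening = 1,
  F-opening a partially opened box = 1).\<close>
definition pb_value :: "('b \<Rightarrow> 't pmf) \<Rightarrow> ('b \<Rightarrow> 't \<Rightarrow> real measure) \<Rightarrow> ('b \<Rightarrow> real) \<Rightarrow> ('b \<Rightarrow> real)
             \<Rightarrow> 'b set \<Rightarrow> ('b \<rightharpoonup> 't) \<Rightarrow> real \<Rightarrow> real" where
  "pb_value Q K cF cP C P y = pb_W Q K cF cP (2 * card C + card (dom P)) C P y"

definition pb_value_Fopen :: "('b \<Rightarrow> 't pmf) \<Rightarrow> ('b \<Rightarrow> 't \<Rightarrow> real measure) \<Rightarrow> ('b \<Rightarrow> real) \<Rightarrow> ('b \<Rightarrow> real)
             \<Rightarrow> 'b set \<Rightarrow> ('b \<rightharpoonup> 't) \<Rightarrow> real \<Rightarrow> 'b \<Rightarrow> real" where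
  "pb_value_Fopen Q K cF cP C P y i =
     - cF i + (\<integral>t. (\<integral>v. pb_value Q K cF cP (C - {i}) P (max y v) \<partial>K i t) \<partial>measure_pmf (Q i))"

definition is_sigmaF :: "'t pmf \<Rightarrow> ('t \<Rightarrow> real measure) \<Rightarrow> real \<Rightarrow> real \<Rightarrow> bool" where
  "is_sigmaF Qb Kb c \<sigma> \<longleftrightarrow> (\<integral>t. (\<integral>v. max 0 (v - \<sigma>) \<partial>Kb t) \<partial>measure_pmf Qb) = c"

definition is_sigmaF_cond :: "real measure \<Rightarrow> real \<Rightarrow> real \<Rightarrow> bool" where
  "is_sigmaF_cond Kbt c \<sigma> \<longleftrightarrow> (\<integral>v. max 0 (v - \<sigma>) \<partial>Kbt) = c"

definition is_sigmaP :: "'t pmf \<Rightarrow> ('t \<Rightarrow> real measure) \<Rightarrow> real \<Rightarrow> real \<Rightarrow> real \<Rightarrow> bool" where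
  "is_sigmaP Qb Kb cf cp \<sigma> \<longleftrightarrow>
     (\<integral>t. max 0 (- cf + (\<integral>v. max 0 (v - \<sigma>) \<partial>Kb t)) \<partial>measure_pmf Qb) = cp"

end

(*
  Weitzman's amortisation argument, adapted to partial inspection.  Fix a box j and a level
  sigma.  The value of any state is at most the value of the state in which j is replaced by the
  free prize min(V_j, sigma), plus the option value of j at sigma: what j alone would be worth
  to a player already holding sigma.  F-opening j
  gains nothing more, because V_j - min(V_j, sigma) = (V_j - sigma)^+; P-opening j reduces to
  the same bound for the partially opened box; and inspecting any other box commutes with
  collecting the capped prize of j (Fubini).  The option value vanishes once sigma dominates
  the opening thresholds of j.

  Taking for sigma the prize in hand, one box after another, shows that stopping is optimal once
  y dominates every threshold.  Hence y < sigma_i^F, and after F-opening i one stops at once if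
  V_i >= sigma_i^F.  So F-opening i is worth exactly the value of receiving min(V_i, sigma_i^F)
  for free, which by the bound for j = i and sigma = sigma_i^F is the value of the state.
*)

theory Submission
  imports Defs
begin

section \<open>Lipschitz integrands\<close>

definition finite_mean_law :: "real measure \<Rightarrow> bool" where
  "finite_mean_law M \<longleftrightarrow> prob_space M \<and> sets M = sets borel \<and> integrable M (\<lambda>v. v)"

lemma lipschitz_on_realD:
  fixes f :: "real \<Rightarrow> real"
  shows "L-lipschitz_on UNIV f \<Longrightarrow> \<bar>f a - f b\<bar> \<le> L * \<bar>a - b\<bar>"
  by (metis UNIV_I dist_real_def lipschitz_onD)

lemma lipschitz_on_realI:
  fixes f :: "real \<Rightarrow> real"
  assumes "0 \<le> L" "\<And>a b. f a \<le> f b + L * \<bar>a - b\<bar>"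
  shows "L-lipschitz_on S f"
proof (rule lipschitz_onI)
  fix a b
  show "dist (f a) (f b) \<le> L * dist a b"
    using assms(2)[of a b] assms(2)[of b a] by (simp add: dist_real_def abs_minus_commute)
qed (fact assms(1))

lemma lipschitz_on_const_add:
  fixes f :: "real \<Rightarrow> real"
  assumes "L-lipschitz_on S f"
  shows "L-lipschitz_on S (\<lambda>x. c + f x)"
  using lipschitz_on_add[OF lipschitz_on_constant assms] by simp

lemma lipschitz_on_compose_nonexpansive:
  fixes w g :: "real \<Rightarrow> real"
  assumes w: "L-lipschitz_on UNIV w" and g: "\<And>a b. \<bar>g a - g b\<bar> \<le> \<bar>a - b\<bar>"
  shows "L-lipschitz_on UNIV (\<lambda>v. w (g v))"
proof (rule lipschitz_on_realI)
  show "0 \<le> L" by (rule lipschitz_on_nonneg[OF w])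
  fix a b
  have "\<bar>w (g a) - w (g b)\<bar> \<le> L * \<bar>a - b\<bar>"
    using lipschitz_on_realD[OF w, of "g a" "g b"] mult_left_mono[OF g[of a b] \<open>0 \<le> L\<close>] by linarith
  then show "w (g a) \<le> w (g b) + L * \<bar>a - b\<bar>" by linarith
qed

lemma lipschitz_on_compose_max_min:
  fixes w :: "real \<Rightarrow> real"
  assumes w: "L-lipschitz_on UNIV w"
  shows "L-lipschitz_on UNIV (\<lambda>v. w (max y v))" and "L-lipschitz_on UNIV (\<lambda>y. w (max y v))"
    and "L-lipschitz_on UNIV (\<lambda>u. w (max y (min u \<sigma>)))"
    and "L-lipschitz_on UNIV (\<lambda>u. w (max (max y (min u \<sigma>)) v))"
proof -
  have "\<bar>max y a - max y b\<bar> \<le> \<bar>a - b\<bar>" "\<bar>max a v - max b v\<bar> \<le> \<bar>a - b\<bar>"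
    "\<bar>max y (min a \<sigma>) - max y (min b \<sigma>)\<bar> \<le> \<bar>a - b\<bar>"
    "\<bar>max (max y (min a \<sigma>)) v - max (max y (min b \<sigma>)) v\<bar> \<le> \<bar>a - b\<bar>" for a b :: real
    by (auto simp: abs_le_iff max_def min_def)
  then show "L-lipschitz_on UNIV (\<lambda>v. w (max y v))" "L-lipschitz_on UNIV (\<lambda>y. w (max y v))"
    "L-lipschitz_on UNIV (\<lambda>u. w (max y (min u \<sigma>)))"
    "L-lipschitz_on UNIV (\<lambda>u. w (max (max y (min u \<sigma>)) v))"
    by (intro lipschitz_on_compose_nonexpansive[OF w]; simp)+
qed

lemma lipschitz_on_excess: "1-lipschitz_on UNIV (\<lambda>v. max 0 (v - \<sigma>::real))"
  by (rule lipschitz_on_realI) (auto simp: max_def)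

lemma finite_mean_law_measurable:
  assumes "finite_mean_law M" "continuous_on UNIV f"
  shows "f \<in> borel_measurable M"
proof -
  have "f \<in> borel_measurable borel" by (rule borel_measurable_continuous_onI[OF assms(2)])
  then show ?thesis using assms(1) measurable_cong_sets unfolding finite_mean_law_def by blast
qed

lemma lipschitz_integrable:
  fixes f :: "real \<Rightarrow> real"
  assumes M: "finite_mean_law M" and f: "L-lipschitz_on UNIV f"
  shows "integrable M f"
proof (rule Bochner_Integration.integrable_bound)
  interpret prob_space M using M by (simp add: finite_mean_law_def)
  show "integrable M (\<lambda>v. \<bar>f 0\<bar> + L * \<bar>v\<bar>)"
    using M by (auto simp: finite_mean_law_def)
  show "f \<in> borel_measurable M"
    using M lipschitz_on_continuous_on[OF f] by (rule finite_mean_law_measurable)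
  have "norm (f v) \<le> norm (\<bar>f 0\<bar> + L * \<bar>v\<bar>)" for v
    using lipschitz_on_realD[OF f, of v 0] abs_triangle_ineq2[of "f v" "f 0"]
      abs_ge_self[of "\<bar>f 0\<bar> + L * \<bar>v\<bar>"] by simp
  then show "AE v in M. norm (f v) \<le> norm (\<bar>f 0\<bar> + L * \<bar>v\<bar>)"
    by simp
qed

lemma lipschitz_integral:
  fixes F :: "'a \<Rightarrow> real \<Rightarrow> real"
  assumes "prob_space M" and int: "\<And>v. integrable M (\<lambda>u. F u v)"
    and lip: "\<And>u. L-lipschitz_on UNIV (F u)"
  shows "L-lipschitz_on UNIV (\<lambda>v. \<integral>u. F u v \<partial>M)"
proof (rule lipschitz_on_realI)
  interpret prob_space M by fact
  show "0 \<le> L" using lipschitz_on_nonneg[OF lip] .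
  fix a b
  have "F u a \<le> F u b + L * \<bar>a - b\<bar>" for u
    using lipschitz_on_realD[OF lip, of u a b] by linarith
  then have "(\<integral>u. F u a \<partial>M) \<le> (\<integral>u. F u b + L * \<bar>a - b\<bar> \<partial>M)"
    using int by (intro integral_mono) auto
  then show "(\<integral>u. F u a \<partial>M) \<le> (\<integral>u. F u b \<partial>M) + L * \<bar>a - b\<bar>"
    using int by (simp add: prob_space)
qed

lemma lipschitz_integral_law:
  fixes F :: "real \<Rightarrow> real \<Rightarrow> real"
  assumes M: "finite_mean_law M"
    and lip1: "\<And>v. L'-lipschitz_on UNIV (\<lambda>u. F u v)" and lip2: "\<And>u. L-lipschitz_on UNIV (F u)"
  shows "L-lipschitz_on UNIV (\<lambda>v. \<integral>u. F u v \<partial>M)"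
  using M lipschitz_integrable[OF M lip1] by (intro lipschitz_integral lip2) (simp_all add: finite_mean_law_def)

lemma excess_antimono:
  assumes "finite_mean_law M" "\<sigma> \<le> \<sigma>'"
  shows "(\<integral>v. max 0 (v - \<sigma>') \<partial>M) \<le> (\<integral>v. max 0 (v - \<sigma>) \<partial>M)"
  using assms(2) by (intro integral_mono lipschitz_integrable[OF assms(1) lipschitz_on_excess]) auto

lemma lipschitz_on_uncurry:
  fixes F :: "real \<Rightarrow> real \<Rightarrow> real"
  assumes lip1: "\<And>v. L-lipschitz_on UNIV (\<lambda>u. F u v)" and lip2: "\<And>u. L-lipschitz_on UNIV (F u)"
  shows "(2 * L)-lipschitz_on UNIV (\<lambda>p. F (fst p) (snd p))"
proof (rule lipschitz_onI)
  have L: "0 \<le> L" using lipschitz_on_nonneg[OF lip2] .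
  then show "0 \<le> 2 * L" by simp
  fix p q :: "real \<times> real"
  have "dist (F (fst p) (snd p)) (F (fst q) (snd q))
      \<le> dist (F (fst p) (snd p)) (F (fst q) (snd p)) + dist (F (fst q) (snd p)) (F (fst q) (snd q))"
    by (rule dist_triangle)
  also have "\<dots> \<le> L * dist (fst p) (fst q) + L * dist (snd p) (snd q)"
    using lipschitz_onD[OF lip1] lipschitz_onD[OF lip2] by (intro add_mono) auto
  also have "\<dots> \<le> L * dist p q + L * dist p q"
    using L by (intro add_mono mult_left_mono dist_fst_le dist_snd_le) auto
  finally show "dist (F (fst p) (snd p)) (F (fst q) (snd q)) \<le> 2 * L * dist p q" by simp
qed

lemma lipschitz_Fubini:
  fixes F :: "real \<Rightarrow> real \<Rightarrow> real"
  assumes M1: "finite_mean_law M1" and M2: "finite_mean_law M2"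
    and lip1: "\<And>v. L-lipschitz_on UNIV (\<lambda>u. F u v)" and lip2: "\<And>u. L-lipschitz_on UNIV (F u)"
  shows "(\<integral>v. (\<integral>u. F u v \<partial>M1) \<partial>M2) = (\<integral>u. (\<integral>v. F u v \<partial>M2) \<partial>M1)"
proof -
  interpret M1: prob_space M1 using M1 by (simp add: finite_mean_law_def)
  interpret M2: prob_space M2 using M2 by (simp add: finite_mean_law_def)
  interpret pair_prob_space M1 M2 by unfold_locales
  have "sets (M1 \<Otimes>\<^sub>M M2) = sets (borel \<Otimes>\<^sub>M borel :: (real \<times> real) measure)"
    using M1 M2 unfolding finite_mean_law_def by (intro sets_pair_measure_cong) auto
  then have sets_pair: "sets (M1 \<Otimes>\<^sub>M M2) = sets (borel :: (real \<times> real) measure)"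
    by (simp only: borel_prod)
  have "(\<lambda>p. F (fst p) (snd p)) \<in> borel_measurable borel"
    using lipschitz_on_continuous_on[OF lipschitz_on_uncurry[OF lip1 lip2]]
    by (rule borel_measurable_continuous_onI)
  then have meas: "(\<lambda>p. F (fst p) (snd p)) \<in> borel_measurable (M1 \<Otimes>\<^sub>M M2)"
    using sets_pair measurable_cong_sets by blast
  have lip_abs: "L-lipschitz_on UNIV (\<lambda>u. \<bar>F u v\<bar>)" for v
  proof (rule lipschitz_on_realI)
    show "0 \<le> L" by (rule lipschitz_on_nonneg[OF lip2])
    fix a b
    show "\<bar>F a v\<bar> \<le> \<bar>F b v\<bar> + L * \<bar>a - b\<bar>"
      using lipschitz_on_realD[OF lip1[of v], of a b] abs_triangle_ineq3[of "F a v" "F b v"] by linarith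
  qed
  have "integrable (M1 \<Otimes>\<^sub>M M2) (\<lambda>p. F (fst p) (snd p))"
  proof (rule Fubini_integrable[OF meas])
    have "L-lipschitz_on UNIV (\<lambda>u. \<integral>v. \<bar>F u v\<bar> \<partial>M2)"
      using lipschitz_integrable[OF M2 lip2] lip_abs
      by (intro lipschitz_integral[OF M2.prob_space_axioms]) auto
    then show "integrable M1 (\<lambda>u. \<integral>v. norm (F (fst (u, v)) (snd (u, v))) \<partial>M2)"
      using lipschitz_integrable[OF M1] by simp
    show "AE u in M1. integrable M2 (\<lambda>v. F (fst (u, v)) (snd (u, v)))"
      using lipschitz_integrable[OF M2 lip2] by simp
  qed
  then show ?thesis
    using Fubini_integral[of F] by (simp add: case_prod_beta')
qed

section \<open>Finite mixtures of prize laws\<close>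

lemma pmf_integral_finite_sum:
  "finite (set_pmf Q) \<Longrightarrow> (\<integral>t. g t \<partial>measure_pmf Q) = (\<Sum>t\<in>set_pmf Q. pmf Q t * g t)"
  by (subst integral_measure_pmf_real) (auto simp: mult.commute)

lemma pmf_integral_cong:
  "(\<And>t. t \<in> set_pmf Q \<Longrightarrow> f t = g t) \<Longrightarrow> (\<integral>t. f t \<partial>measure_pmf Q) = (\<integral>t. g t \<partial>measure_pmf Q)"
  by (intro integral_cong_AE) (auto simp: AE_measure_pmf_iff)

lemma pmf_integral_mono:
  fixes f g :: "'t \<Rightarrow> real"
  assumes "finite (set_pmf Q)" "\<And>t. t \<in> set_pmf Q \<Longrightarrow> f t \<le> g t"
  shows "(\<integral>t. f t \<partial>measure_pmf Q) \<le> (\<integral>t. g t \<partial>measure_pmf Q)"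
  using assms by (intro integral_mono_AE integrable_measure_pmf_finite) (auto simp: AE_measure_pmf_iff)

lemma pmf_integral_add:
  fixes f g :: "'t \<Rightarrow> real"
  assumes "finite (set_pmf Q)"
  shows "(\<integral>t. f t + g t \<partial>measure_pmf Q) = (\<integral>t. f t \<partial>measure_pmf Q) + (\<integral>t. g t \<partial>measure_pmf Q)"
  using assms by (intro Bochner_Integration.integral_add integrable_measure_pmf_finite)

lemma pmf_integral_add_const:
  fixes f :: "'t \<Rightarrow> real"
  assumes "finite (set_pmf P)"
  shows "(\<integral>t. f t + c \<partial>P) = (\<integral>t. f t \<partial>P) + c"
  using pmf_integral_add[OF assms, of f "\<lambda>_. c"] by (simp add: measure_pmf.prob_space)

lemma pmf_integral_commute:
  fixes F :: "'s \<Rightarrow> 't \<Rightarrow> real"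
  assumes "finite (set_pmf P)" "finite (set_pmf Q)"
  shows "(\<integral>s. (\<integral>t. F s t \<partial>measure_pmf Q) \<partial>measure_pmf P)
       = (\<integral>t. (\<integral>s. F s t \<partial>measure_pmf P) \<partial>measure_pmf Q)"
  using assms
  by (simp add: pmf_integral_finite_sum sum_distrib_left sum.swap[of _ "set_pmf P"] mult.left_commute)

lemma pmf_integral_commute_integral:
  fixes G :: "'t \<Rightarrow> 'a \<Rightarrow> real"
  assumes fin: "finite (set_pmf P)" and int: "\<And>t. t \<in> set_pmf P \<Longrightarrow> integrable M (G t)"
  shows "(\<integral>t. (\<integral>u. G t u \<partial>M) \<partial>measure_pmf P) = (\<integral>u. (\<integral>t. G t u \<partial>measure_pmf P) \<partial>M)"
proof -
  have "(\<integral>t. (\<integral>u. G t u \<partial>M) \<partial>measure_pmf P) = (\<Sum>t\<in>set_pmf P. (\<integral>u. pmf P t * G t u \<partial>M))"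
    using fin by (simp add: pmf_integral_finite_sum)
  also have "\<dots> = (\<integral>u. (\<Sum>t\<in>set_pmf P. pmf P t * G t u) \<partial>M)"
    using int by (intro Bochner_Integration.integral_sum[symmetric]) auto
  also have "\<dots> = (\<integral>u. (\<integral>t. G t u \<partial>measure_pmf P) \<partial>M)"
    using fin by (simp add: pmf_integral_finite_sum)
  finally show ?thesis .
qed

lemma lipschitz_pmf_integral:
  fixes G :: "'t \<Rightarrow> real \<Rightarrow> real"
  assumes fin: "finite (set_pmf P)" and lip: "\<And>t. t \<in> set_pmf P \<Longrightarrow> L-lipschitz_on UNIV (G t)"
  shows "L-lipschitz_on UNIV (\<lambda>y. \<integral>t. G t y \<partial>measure_pmf P)"
proof (rule lipschitz_on_realI)
  obtain t where "t \<in> set_pmf P" using set_pmf_not_empty[of P] by blast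
  then show "0 \<le> L" using lip lipschitz_on_nonneg by blast
  fix a b
  have "G t a \<le> G t b + L * \<bar>a - b\<bar>" if "t \<in> set_pmf P" for t
    using lipschitz_on_realD[OF lip[OF that], of a b] by linarith
  then have "(\<integral>t. G t a \<partial>measure_pmf P) \<le> (\<integral>t. G t b + L * \<bar>a - b\<bar> \<partial>measure_pmf P)"
    by (rule pmf_integral_mono[OF fin])
  then show "(\<integral>t. G t a \<partial>measure_pmf P) \<le> (\<integral>t. G t b \<partial>measure_pmf P) + L * \<bar>a - b\<bar>"
    by (simp add: pmf_integral_add[OF fin] measure_pmf.prob_space)
qed

definition finite_mixture :: "'t pmf \<Rightarrow> ('t \<Rightarrow> real measure) \<Rightarrow> bool" where
  "finite_mixture Q K \<longleftrightarrow> finite (set_pmf Q) \<and> (\<forall>t\<in>set_pmf Q. finite_mean_law (K t))"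

definition mix_integral :: "'t pmf \<Rightarrow> ('t \<Rightarrow> real measure) \<Rightarrow> (real \<Rightarrow> real) \<Rightarrow> real" where
  "mix_integral Q K f = (\<integral>t. (\<integral>u. f u \<partial>K t) \<partial>measure_pmf Q)"

lemma finite_mixture_return_pmf: "finite_mean_law (K t) \<Longrightarrow> finite_mixture (return_pmf t) K"
  by (simp add: finite_mixture_def)

lemma mix_integral_return_pmf: "mix_integral (return_pmf t) K f = (\<integral>u. f u \<partial>K t)"
  by (simp add: mix_integral_def)

lemma mix_integral_mono:
  assumes Q: "finite_mixture Q K" and f: "L-lipschitz_on UNIV f" and g: "L'-lipschitz_on UNIV g"
    and le: "\<And>u. f u \<le> g u"
  shows "mix_integral Q K f \<le> mix_integral Q K g"
  unfolding mix_integral_def using Q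
  by (intro pmf_integral_mono integral_mono lipschitz_integrable[OF _ f] lipschitz_integrable[OF _ g] le)
     (auto simp: finite_mixture_def)

lemma mix_integral_add:
  assumes Q: "finite_mixture Q K" and f: "L-lipschitz_on UNIV f" and g: "L'-lipschitz_on UNIV g"
  shows "mix_integral Q K (\<lambda>u. f u + g u) = mix_integral Q K f + mix_integral Q K g"
proof -
  have "mix_integral Q K (\<lambda>u. f u + g u) = (\<integral>t. (\<integral>u. f u \<partial>K t) + (\<integral>u. g u \<partial>K t) \<partial>measure_pmf Q)"
    unfolding mix_integral_def using Q
    by (intro pmf_integral_cong Bochner_Integration.integral_add lipschitz_integrable[OF _ f]
          lipschitz_integrable[OF _ g]) (auto simp: finite_mixture_def)
  then show ?thesis
    using Q by (simp add: mix_integral_def pmf_integral_add finite_mixture_def)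
qed

lemma mix_integral_const:
  assumes "finite_mixture Q K"
  shows "mix_integral Q K (\<lambda>u. c) = c"
proof -
  have "mix_integral Q K (\<lambda>u. c) = (\<integral>t. c \<partial>measure_pmf Q)"
    unfolding mix_integral_def using assms
    by (intro pmf_integral_cong) (auto simp: finite_mixture_def finite_mean_law_def prob_space.prob_space)
  then show ?thesis by (simp add: measure_pmf.prob_space)
qed

lemma mix_integral_add_const:
  assumes "finite_mixture Q K" "L-lipschitz_on UNIV f"
  shows "mix_integral Q K (\<lambda>u. f u + c) = mix_integral Q K f + c"
  using mix_integral_add[OF assms lipschitz_on_constant] mix_integral_const[OF assms(1)] by simp

lemma lipschitz_mix_integral:
  fixes F :: "real \<Rightarrow> real \<Rightarrow> real"
  assumes Q: "finite_mixture Q K" and lip1: "\<And>v. L'-lipschitz_on UNIV (\<lambda>u. F u v)"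
    and lip2: "\<And>u. L-lipschitz_on UNIV (F u)"
  shows "L-lipschitz_on UNIV (\<lambda>v. mix_integral Q K (\<lambda>u. F u v))"
  unfolding mix_integral_def
proof (rule lipschitz_pmf_integral)
  show "finite (set_pmf Q)" using Q by (simp add: finite_mixture_def)
  fix t assume "t \<in> set_pmf Q"
  then show "L-lipschitz_on UNIV (\<lambda>v. \<integral>u. F u v \<partial>K t)"
    using Q lip1 lip2 by (intro lipschitz_integral_law) (simp_all add: finite_mixture_def)
qed

lemma mix_integral_commute:
  fixes F :: "real \<Rightarrow> real \<Rightarrow> real"
  assumes Q1: "finite_mixture Q1 K1" and Q2: "finite_mixture Q2 K2"
    and lip1: "\<And>v. L-lipschitz_on UNIV (\<lambda>u. F u v)" and lip2: "\<And>u. L-lipschitz_on UNIV (F u)"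
  shows "mix_integral Q1 K1 (\<lambda>v. mix_integral Q2 K2 (\<lambda>u. F u v))
       = mix_integral Q2 K2 (\<lambda>u. mix_integral Q1 K1 (\<lambda>v. F u v))"
proof -
  have fin1: "finite (set_pmf Q1)" and law1: "\<And>t. t \<in> set_pmf Q1 \<Longrightarrow> finite_mean_law (K1 t)"
    using Q1 by (auto simp: finite_mixture_def)
  have fin2: "finite (set_pmf Q2)" and law2: "\<And>t. t \<in> set_pmf Q2 \<Longrightarrow> finite_mean_law (K2 t)"
    using Q2 by (auto simp: finite_mixture_def)
  have "mix_integral Q1 K1 (\<lambda>v. mix_integral Q2 K2 (\<lambda>u. F u v))
      = (\<integral>t1. (\<integral>t2. (\<integral>v. (\<integral>u. F u v \<partial>K2 t2) \<partial>K1 t1) \<partial>Q2) \<partial>Q1)"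
    unfolding mix_integral_def
    using fin2 law1 law2 lip1 lip2
    by (intro pmf_integral_cong pmf_integral_commute_integral[symmetric] lipschitz_integrable
          lipschitz_integral_law)
  also have "\<dots> = (\<integral>t1. (\<integral>t2. (\<integral>u. (\<integral>v. F u v \<partial>K1 t1) \<partial>K2 t2) \<partial>Q2) \<partial>Q1)"
    using law1 law2 lip1 lip2 by (intro pmf_integral_cong lipschitz_Fubini)
  also have "\<dots> = (\<integral>t2. (\<integral>t1. (\<integral>u. (\<integral>v. F u v \<partial>K1 t1) \<partial>K2 t2) \<partial>Q1) \<partial>Q2)"
    by (rule pmf_integral_commute[OF fin1 fin2])
  also have "\<dots> = mix_integral Q2 K2 (\<lambda>u. mix_integral Q1 K1 (\<lambda>v. F u v))"
    unfolding mix_integral_def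
    using fin1 law1 law2 lip1 lip2
    by (intro pmf_integral_cong pmf_integral_commute_integral lipschitz_integrable
          lipschitz_integral_law)
  finally show ?thesis .
qed

lemma pmf_integral_mix_integral_commute:
  fixes G :: "'s \<Rightarrow> real \<Rightarrow> real"
  assumes P: "finite (set_pmf P)" and Q: "finite_mixture Q K"
    and lip: "\<And>s. s \<in> set_pmf P \<Longrightarrow> L-lipschitz_on UNIV (G s)"
  shows "(\<integral>s. mix_integral Q K (G s) \<partial>P) = mix_integral Q K (\<lambda>u. \<integral>s. G s u \<partial>P)"
proof -
  have fin: "finite (set_pmf Q)" and law: "\<And>t. t \<in> set_pmf Q \<Longrightarrow> finite_mean_law (K t)"
    using Q by (auto simp: finite_mixture_def)
  have "(\<integral>s. mix_integral Q K (G s) \<partial>P) = (\<integral>t. (\<integral>s. (\<integral>u. G s u \<partial>K t) \<partial>P) \<partial>Q)"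
    unfolding mix_integral_def by (rule pmf_integral_commute[OF P fin])
  also have "\<dots> = mix_integral Q K (\<lambda>u. \<integral>s. G s u \<partial>P)"
    unfolding mix_integral_def
    using law lip by (intro pmf_integral_cong pmf_integral_commute_integral[OF P] lipschitz_integrable)
  finally show ?thesis .
qed

lemma mix_integral_le_capped_plus_excess:
  assumes Q: "finite_mixture Q K" and w: "1-lipschitz_on UNIV w"
  shows "mix_integral Q K (\<lambda>v. w (max y v))
    \<le> mix_integral Q K (\<lambda>v. w (max y (min v \<sigma>))) + mix_integral Q K (\<lambda>v. max 0 (v - \<sigma>))"
proof -
  note lip = lipschitz_on_compose_max_min[OF w]
  have "w (max y v) \<le> w (max y (min v \<sigma>)) + max 0 (v - \<sigma>)" for v
  proof -
    have "\<bar>max y v - max y (min v \<sigma>)\<bar> \<le> max 0 (v - \<sigma>)" by (auto simp: max_def min_def)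
    then show ?thesis
      using lipschitz_on_realD[OF w, of "max y v" "max y (min v \<sigma>)"] by (simp only: mult_1 abs_le_iff) linarith
  qed
  then have "mix_integral Q K (\<lambda>v. w (max y v))
      \<le> mix_integral Q K (\<lambda>v. w (max y (min v \<sigma>)) + max 0 (v - \<sigma>))"
    by (intro mix_integral_mono[OF Q lip(1) lipschitz_on_add[OF lip(3) lipschitz_on_excess]])
  also have "\<dots> = mix_integral Q K (\<lambda>v. w (max y (min v \<sigma>))) + mix_integral Q K (\<lambda>v. max 0 (v - \<sigma>))"
    by (rule mix_integral_add[OF Q lip(3) lipschitz_on_excess])
  finally show ?thesis .
qed

(* Inspecting another box and collecting the capped prize of box j are independent, so their
   order can be exchanged (Fubini). *)
lemma Fopen_commute_capping:
  assumes Q1: "finite_mixture Q1 K1" and Q2: "finite_mixture Q2 K2"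
    and w1: "L-lipschitz_on UNIV w1" and w2: "L-lipschitz_on UNIV w2"
    and le: "\<And>z. w1 z \<le> mix_integral Q2 K2 (\<lambda>u. w2 (max z (min u \<sigma>))) + m"
  shows "c + mix_integral Q1 K1 (\<lambda>v. w1 (max y v))
    \<le> mix_integral Q2 K2 (\<lambda>u. c + mix_integral Q1 K1 (\<lambda>v. w2 (max (max y (min u \<sigma>)) v))) + m"
proof -
  define F where "F u v = w2 (max (max y (min u \<sigma>)) v)" for u v
  have lipF: "L-lipschitz_on UNIV (\<lambda>u. F u v)" "L-lipschitz_on UNIV (F u)" for u v
    unfolding F_def using lipschitz_on_compose_max_min[OF w2] by auto
  have lip_inner1: "L-lipschitz_on UNIV (\<lambda>v. mix_integral Q2 K2 (\<lambda>u. F u v))"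
    by (rule lipschitz_mix_integral[OF Q2 lipF])
  have lip_inner2: "L-lipschitz_on UNIV (\<lambda>u. mix_integral Q1 K1 (\<lambda>v. F u v))"
    by (rule lipschitz_mix_integral[OF Q1, where F="\<lambda>v u. F u v", OF lipF(2) lipF(1)])
  have "w1 (max y v) \<le> mix_integral Q2 K2 (\<lambda>u. F u v) + m" for v
    using le[of "max y v"] unfolding F_def by (simp add: ac_simps)
  then have "mix_integral Q1 K1 (\<lambda>v. w1 (max y v)) \<le> mix_integral Q1 K1 (\<lambda>v. mix_integral Q2 K2 (\<lambda>u. F u v) + m)"
    by (intro mix_integral_mono[OF Q1 lipschitz_on_compose_max_min(1)[OF w1]
          lipschitz_on_add[OF lip_inner1 lipschitz_on_constant]])
  also have "\<dots> = mix_integral Q2 K2 (\<lambda>u. mix_integral Q1 K1 (\<lambda>v. F u v)) + m"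
    by (simp add: mix_integral_add_const[OF Q1 lip_inner1] mix_integral_commute[OF Q1 Q2 lipF])
  finally show ?thesis
    using mix_integral_add_const[OF Q2 lip_inner2, of c] by (simp add: F_def add.commute)
qed

lemma Popen_commute_capping:
  assumes P: "finite (set_pmf P)" and Q: "finite_mixture Q K"
    and w2: "\<And>t. t \<in> set_pmf P \<Longrightarrow> L-lipschitz_on UNIV (w2 t)"
    and le: "\<And>t z. t \<in> set_pmf P \<Longrightarrow> w1 t z \<le> mix_integral Q K (\<lambda>u. w2 t (max z (min u \<sigma>))) + m"
  shows "c + (\<integral>t. w1 t y \<partial>P) \<le> mix_integral Q K (\<lambda>u. c + (\<integral>t. w2 t (max y (min u \<sigma>)) \<partial>P)) + m"
proof -
  have lip: "L-lipschitz_on UNIV (\<lambda>u. \<integral>t. w2 t (max y (min u \<sigma>)) \<partial>P)"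
    using w2 by (intro lipschitz_pmf_integral[OF P] lipschitz_on_compose_max_min(3))
  have "(\<integral>t. w1 t y \<partial>P) \<le> (\<integral>t. mix_integral Q K (\<lambda>u. w2 t (max y (min u \<sigma>))) + m \<partial>P)"
    using le by (rule pmf_integral_mono[OF P])
  also have "\<dots> = mix_integral Q K (\<lambda>u. \<integral>t. w2 t (max y (min u \<sigma>)) \<partial>P) + m"
    by (simp add: pmf_integral_add_const[OF P]
        pmf_integral_mix_integral_commute[OF P Q lipschitz_on_compose_max_min(3)[OF w2]])
  finally show ?thesis
    using mix_integral_add_const[OF Q lip, of c] by (simp add: add.commute)
qed

section \<open>The value function\<close>

declare pb_W.simps(2)[simp del]

locale pandora =
  fixes Q :: "'b \<Rightarrow> 't pmf" and K :: "'b \<Rightarrow> 't \<Rightarrow> real measure" and cF cP :: "'b \<Rightarrow> real"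
    and B :: "'b set"
  assumes finite_boxes: "finite B"
    and finite_mixture_box: "\<And>b. b \<in> B \<Longrightarrow> finite_mixture (Q b) (K b)"
begin

abbreviation W :: "nat \<Rightarrow> 'b set \<Rightarrow> ('b \<rightharpoonup> 't) \<Rightarrow> real \<Rightarrow> real" where
  "W \<equiv> pb_W Q K cF cP"

definition valid_state :: "'b set \<Rightarrow> ('b \<rightharpoonup> 't) \<Rightarrow> bool" where
  "valid_state C P \<longleftrightarrow> C \<union> dom P \<subseteq> B \<and> C \<inter> dom P = {} \<and> (\<forall>j\<in>dom P. the (P j) \<in> set_pmf (Q j))"

(* F-opening a closed box and F-opening a partially opened box are one action: draw the type
   from this law, then the prize from K j. *)
definition type_law :: "'b \<Rightarrow> 't option \<Rightarrow> 't pmf" where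
  "type_law j \<tau> = (case \<tau> of None \<Rightarrow> Q j | Some t \<Rightarrow> return_pmf t)"

definition Fopen_value :: "nat \<Rightarrow> 'b set \<Rightarrow> ('b \<rightharpoonup> 't) \<Rightarrow> real \<Rightarrow> 'b \<Rightarrow> real" where
  "Fopen_value n C P y j =
     - cF j + mix_integral (type_law j (P j)) (K j) (\<lambda>v. W n (C - {j}) (P(j := None)) (max y v))"

definition Popen_value :: "nat \<Rightarrow> 'b set \<Rightarrow> ('b \<rightharpoonup> 't) \<Rightarrow> real \<Rightarrow> 'b \<Rightarrow> real" where
  "Popen_value n C P y j = - cP j + (\<integral>t. W n (C - {j}) (P(j \<mapsto> t)) y \<partial>Q j)"

lemma valid_state_finite: "valid_state C P \<Longrightarrow> finite C \<and> finite (dom P)"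
  unfolding valid_state_def using finite_boxes by (meson finite_subset le_sup_iff)

lemma valid_state_Fopen: "valid_state C P \<Longrightarrow> valid_state (C - {j}) (P(j := None))"
  unfolding valid_state_def by auto

lemma valid_state_Popen:
  "valid_state C P \<Longrightarrow> j \<in> C \<Longrightarrow> t \<in> set_pmf (Q j) \<Longrightarrow> valid_state (C - {j}) (P(j \<mapsto> t))"
  unfolding valid_state_def by auto

lemma valid_state_closed: "valid_state C P \<Longrightarrow> j \<in> C \<Longrightarrow> P j = None \<and> j \<in> B"
  unfolding valid_state_def by auto

lemma finite_mixture_type_law:
  assumes "valid_state C P" "j \<in> C \<union> dom P"
  shows "finite_mixture (type_law j (P j)) (K j)"
proof (cases "P j")
  case None
  then show ?thesis using assms finite_mixture_box by (auto simp: valid_state_def type_law_def)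
next
  case (Some t)
  then have "j \<in> dom P" by auto
  then have "j \<in> B" "t \<in> set_pmf (Q j)" using assms(1) Some unfolding valid_state_def by force+
  then have "finite_mean_law (K j t)" using finite_mixture_box by (simp add: finite_mixture_def)
  then show ?thesis using Some by (simp add: type_law_def finite_mixture_return_pmf)
qed

lemma finite_types: "valid_state C P \<Longrightarrow> j \<in> C \<Longrightarrow> finite (set_pmf (Q j))"
  using finite_mixture_box valid_state_closed by (auto simp: finite_mixture_def)

lemma W_Suc:
  assumes "valid_state C P"
  shows "W (Suc n) C P y
    = Max ({y} \<union> (\<lambda>j. Fopen_value n C P y j) ` (C \<union> dom P) \<union> (\<lambda>j. Popen_value n C P y j) ` C)"
proof -
  have closed: "(\<lambda>j. - cF j + (\<integral>t. (\<integral>v. W n (C - {j}) P (max y v) \<partial>K j t) \<partial>Q j)) ` C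
      = (\<lambda>j. Fopen_value n C P y j) ` C"
  proof (rule image_cong[OF refl])
    fix j assume "j \<in> C"
    then show "- cF j + (\<integral>t. (\<integral>v. W n (C - {j}) P (max y v) \<partial>K j t) \<partial>Q j) = Fopen_value n C P y j"
      using valid_state_closed[OF assms]
      by (simp add: Fopen_value_def type_law_def fun_upd_idem mix_integral_def)
  qed
  have partial: "(\<lambda>j. - cF j + (\<integral>v. W n C (P(j := None)) (max y v) \<partial>K j (the (P j)))) ` dom P
      = (\<lambda>j. Fopen_value n C P y j) ` dom P"
  proof (rule image_cong[OF refl])
    fix j assume j: "j \<in> dom P"
    then obtain t where t: "P j = Some t" by blast
    have "C - {j} = C" using assms j by (auto simp: valid_state_def)
    then show "- cF j + (\<integral>v. W n C (P(j := None)) (max y v) \<partial>K j (the (P j))) = Fopen_value n C P y j"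
      by (simp add: Fopen_value_def type_law_def mix_integral_return_pmf t)
  qed
  show ?thesis
    unfolding pb_W.simps closed partial image_Un Popen_value_def[symmetric]
    by (simp only: Un_ac)
qed

lemma W_Suc_le_iff:
  assumes "valid_state C P"
  shows "W (Suc n) C P y \<le> z \<longleftrightarrow> y \<le> z \<and> (\<forall>j\<in>C \<union> dom P. Fopen_value n C P y j \<le> z)
    \<and> (\<forall>j\<in>C. Popen_value n C P y j \<le> z)"
  using valid_state_finite[OF assms] unfolding W_Suc[OF assms] by (subst Max_le_iff) auto

lemma W_Suc_ge:
  assumes "valid_state C P"
  shows "y \<le> W (Suc n) C P y"
    and "j \<in> C \<union> dom P \<Longrightarrow> Fopen_value n C P y j \<le> W (Suc n) C P y"
    and "j \<in> C \<Longrightarrow> Popen_value n C P y j \<le> W (Suc n) C P y"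
  using W_Suc_le_iff[OF assms, of n y "W (Suc n) C P y"] by auto

lemma W_ge: "valid_state C P \<Longrightarrow> y \<le> W n C P y"
  by (cases n) (simp_all add: W_Suc_ge)

lemma lipschitz_Fopen_value:
  assumes "valid_state C P" "j \<in> C \<union> dom P" and "1-lipschitz_on UNIV (W n (C - {j}) (P(j := None)))"
  shows "1-lipschitz_on UNIV (\<lambda>y. Fopen_value n C P y j)"
  unfolding Fopen_value_def using lipschitz_on_compose_max_min(1,2)[OF assms(3)]
  by (intro lipschitz_on_const_add lipschitz_mix_integral[OF finite_mixture_type_law[OF assms(1,2)]])

lemma lipschitz_Popen_value:
  assumes "valid_state C P" "j \<in> C"
    and "\<And>t. t \<in> set_pmf (Q j) \<Longrightarrow> 1-lipschitz_on UNIV (W n (C - {j}) (P(j \<mapsto> t)))"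
  shows "1-lipschitz_on UNIV (\<lambda>y. Popen_value n C P y j)"
  unfolding Popen_value_def using finite_types[OF assms(1,2)] assms(3)
  by (intro lipschitz_on_const_add lipschitz_pmf_integral)

lemma lipschitz_W: "valid_state C P \<Longrightarrow> 1-lipschitz_on UNIV (W n C P)"
proof (induction n arbitrary: C P)
  case 0
  show ?case by (simp add: lipschitz_on_id)
next
  case (Suc n)
  have Fopen: "1-lipschitz_on UNIV (\<lambda>y. Fopen_value n C P y j)" if "j \<in> C \<union> dom P" for j
    using Suc.prems that by (intro lipschitz_Fopen_value Suc.IH valid_state_Fopen)
  have Popen: "1-lipschitz_on UNIV (\<lambda>y. Popen_value n C P y j)" if "j \<in> C" for j
    using Suc.prems that by (intro lipschitz_Popen_value Suc.IH valid_state_Popen)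
  show ?case
  proof (rule lipschitz_on_realI)
    fix a b
    show "W (Suc n) C P a \<le> W (Suc n) C P b + 1 * \<bar>a - b\<bar>"
      unfolding W_Suc_le_iff[OF Suc.prems]
    proof (intro conjI ballI)
      show "a \<le> W (Suc n) C P b + 1 * \<bar>a - b\<bar>"
        using W_Suc_ge(1)[OF Suc.prems, where n=n and y=b] abs_ge_self[of "a - b"] by simp
    next
      fix j assume j: "j \<in> C \<union> dom P"
      show "Fopen_value n C P a j \<le> W (Suc n) C P b + 1 * \<bar>a - b\<bar>"
        using lipschitz_on_realD[OF Fopen[OF j], of a b] W_Suc_ge(2)[OF Suc.prems j, where n=n and y=b]
        by (simp only: mult_1 abs_le_iff) linarith
    next
      fix j assume j: "j \<in> C"
      show "Popen_value n C P a j \<le> W (Suc n) C P b + 1 * \<bar>a - b\<bar>"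
        using lipschitz_on_realD[OF Popen[OF j], of a b] W_Suc_ge(3)[OF Suc.prems j, where n=n and y=b]
        by (simp only: mult_1 abs_le_iff) linarith
    qed
  qed simp
qed

lemma W_Suc_mono:
  assumes valid: "valid_state C P"
    and Fopen: "\<And>j z. j \<in> C \<union> dom P \<Longrightarrow> W n (C - {j}) (P(j := None)) z \<le> W m (C - {j}) (P(j := None)) z"
    and Popen: "\<And>j t z. j \<in> C \<Longrightarrow> t \<in> set_pmf (Q j) \<Longrightarrow>
      W n (C - {j}) (P(j \<mapsto> t)) z \<le> W m (C - {j}) (P(j \<mapsto> t)) z"
  shows "W (Suc n) C P y \<le> W (Suc m) C P y"
  unfolding W_Suc_le_iff[OF valid]
proof (intro conjI ballI)
  show "y \<le> W (Suc m) C P y" by (rule W_Suc_ge(1)[OF valid])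
next
  fix j assume j: "j \<in> C \<union> dom P"
  note lip = lipschitz_on_compose_max_min(1)[OF lipschitz_W[OF valid_state_Fopen[OF valid]]]
  have "Fopen_value n C P y j \<le> Fopen_value m C P y j"
    unfolding Fopen_value_def
    using mix_integral_mono[OF finite_mixture_type_law[OF valid j] lip lip Fopen[OF j]] by simp
  then show "Fopen_value n C P y j \<le> W (Suc m) C P y"
    using W_Suc_ge(2)[OF valid j, where n=m and y=y] by linarith
next
  fix j assume j: "j \<in> C"
  have "Popen_value n C P y j \<le> Popen_value m C P y j"
    unfolding Popen_value_def using pmf_integral_mono[OF finite_types[OF valid j] Popen[OF j]] by simp
  then show "Popen_value n C P y j \<le> W (Suc m) C P y"
    using W_Suc_ge(3)[OF valid j, where n=m and y=y] by linarith
qed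

lemma W_le_W_Suc: "valid_state C P \<Longrightarrow> W n C P y \<le> W (Suc n) C P y"
proof (induction n arbitrary: C P y)
  case 0
  then show ?case using W_Suc_ge(1) by simp
next
  case (Suc n)
  then show ?case by (intro W_Suc_mono valid_state_Fopen valid_state_Popen Suc.IH)
qed

lemma W_mono_fuel: "valid_state C P \<Longrightarrow> n \<le> m \<Longrightarrow> W n C P y \<le> W m C P y"
  using lift_Suc_mono_le[of "\<lambda>n. W n C P y"] W_le_W_Suc by blast

definition fuel :: "'b set \<Rightarrow> ('b \<rightharpoonup> 't) \<Rightarrow> nat" where
  "fuel C P = 2 * card C + card (dom P)"

lemma fuel_Fopen:
  assumes "valid_state C P" "j \<in> C \<union> dom P"
  shows "fuel (C - {j}) (P(j := None)) < fuel C P"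
proof -
  have fin: "finite C" "finite (dom P)" using valid_state_finite[OF assms(1)] by auto
  show ?thesis
  proof (cases "j \<in> C")
    case True
    then have "P(j := None) = P" using valid_state_closed[OF assms(1)] by (simp add: fun_upd_idem)
    then show ?thesis using True fin card_Diff1_less[of C j] by (simp add: fuel_def)
  next
    case False
    then have "j \<in> dom P" using assms(2) by blast
    then show ?thesis using False fin card_Diff1_less[of "dom P" j] by (simp add: fuel_def)
  qed
qed

lemma fuel_Popen:
  assumes "valid_state C P" "j \<in> C"
  shows "fuel (C - {j}) (P(j \<mapsto> t)) < fuel C P"
proof -
  have "j \<notin> dom P" "finite C" "finite (dom P)"
    using assms valid_state_finite[OF assms(1)] by (auto simp: valid_state_def)
  then show ?thesis
    using assms(2) card_Suc_Diff1[of C j] by (simp add: fuel_def)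
qed

lemma W_Suc_eq_if_fuel_le: "valid_state C P \<Longrightarrow> fuel C P \<le> n \<Longrightarrow> W (Suc n) C P y = W n C P y"
proof (induction n arbitrary: C P y)
  case 0
  then have "C = {}" "dom P = {}" using valid_state_finite by (auto simp: fuel_def)
  then show ?case using W_Suc[OF 0(1), of 0 y] by simp
next
  case (Suc n)
  have "W (Suc (Suc n)) C P y \<le> W (Suc n) C P y"
  proof (rule W_Suc_mono[OF Suc.prems(1)])
    fix j z assume j: "j \<in> C \<union> dom P"
    have "fuel (C - {j}) (P(j := None)) \<le> n" using fuel_Fopen[OF Suc.prems(1) j] Suc.prems(2) by linarith
    from Suc.IH[OF valid_state_Fopen[OF Suc.prems(1)] this]
    show "W (Suc n) (C - {j}) (P(j := None)) z \<le> W n (C - {j}) (P(j := None)) z" by (rule eq_refl)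
  next
    fix j t z assume j: "j \<in> C" and t: "t \<in> set_pmf (Q j)"
    have "fuel (C - {j}) (P(j \<mapsto> t)) \<le> n" using fuel_Popen[OF Suc.prems(1) j, of t] Suc.prems(2) by linarith
    from Suc.IH[OF valid_state_Popen[OF Suc.prems(1) j t] this]
    show "W (Suc n) (C - {j}) (P(j \<mapsto> t)) z \<le> W n (C - {j}) (P(j \<mapsto> t)) z" by (rule eq_refl)
  qed
  then show ?case using W_le_W_Suc[OF Suc.prems(1)] by (rule antisym)
qed

lemma W_eq_pb_value:
  assumes "valid_state C P" "fuel C P \<le> n"
  shows "W n C P y = pb_value Q K cF cP C P y"
  using assms(2)
proof (induction rule: dec_induct)
  case base
  then show ?case by (simp add: pb_value_def fuel_def)
next
  case (step n)
  then show ?case using W_Suc_eq_if_fuel_le[OF assms(1) step(1), of y] by simp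
qed

section \<open>Capping a box\<close>

(* The gain that box j, in type state tau, would bring to a player who already holds the prize
   sigma and has no other box. *)
definition option_value :: "'b \<Rightarrow> 't option \<Rightarrow> real \<Rightarrow> real" where
  "option_value j \<tau> \<sigma> = (case \<tau> of
      Some t \<Rightarrow> max 0 (- cF j + (\<integral>v. max 0 (v - \<sigma>) \<partial>K j t))
    | None \<Rightarrow> max 0 (max (- cF j + mix_integral (Q j) (K j) (\<lambda>v. max 0 (v - \<sigma>)))
        (- cP j + (\<integral>t. max 0 (- cF j + (\<integral>v. max 0 (v - \<sigma>) \<partial>K j t)) \<partial>Q j))))"

lemma option_value_simps [simp]:
  "option_value j (Some t) \<sigma> = max 0 (- cF j + (\<integral>v. max 0 (v - \<sigma>) \<partial>K j t))"
  "option_value j None \<sigma> = max 0 (max (- cF j + mix_integral (Q j) (K j) (\<lambda>v. max 0 (v - \<sigma>)))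
      (- cP j + (\<integral>t. option_value j (Some t) \<sigma> \<partial>Q j)))"
  by (simp_all add: option_value_def)

lemma option_value_nonneg: "0 \<le> option_value j \<tau> \<sigma>"
  by (cases \<tau>) auto

lemma Fopen_excess_le_option_value:
  "- cF j + mix_integral (type_law j \<tau>) (K j) (\<lambda>v. max 0 (v - \<sigma>)) \<le> option_value j \<tau> \<sigma>"
  by (cases \<tau>) (auto simp: type_law_def mix_integral_return_pmf)

(* The value of the state in which box j is replaced by the prize min(V_j, sigma), received
   for free. *)
definition capped_value :: "nat \<Rightarrow> 'b set \<Rightarrow> ('b \<rightharpoonup> 't) \<Rightarrow> 'b \<Rightarrow> real \<Rightarrow> real \<Rightarrow> real" where
  "capped_value n C P j \<sigma> y =
     mix_integral (type_law j (P j)) (K j) (\<lambda>u. W n (C - {j}) (P(j := None)) (max y (min u \<sigma>)))"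

lemma capped_value_ge:
  assumes "valid_state C P" "j \<in> C \<union> dom P"
  shows "y \<le> capped_value n C P j \<sigma> y"
proof -
  note mix = finite_mixture_type_law[OF assms] and valid' = valid_state_Fopen[OF assms(1), of j]
  have "y \<le> W n (C - {j}) (P(j := None)) (max y (min u \<sigma>))" for u
    using W_ge[OF valid', where y="max y (min u \<sigma>)" and n=n] by linarith
  then have "mix_integral (type_law j (P j)) (K j) (\<lambda>u. y) \<le> capped_value n C P j \<sigma> y"
    unfolding capped_value_def
    by (intro mix_integral_mono[OF mix lipschitz_on_constant
          lipschitz_on_compose_max_min(3)[OF lipschitz_W[OF valid']]])
  then show ?thesis using mix_integral_const[OF mix] by simp
qed

lemma capped_value_mono_fuel:
  assumes "valid_state C P" "j \<in> C \<union> dom P" "n \<le> m"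
  shows "capped_value n C P j \<sigma> y \<le> capped_value m C P j \<sigma> y"
proof -
  note lip = lipschitz_on_compose_max_min(3)[OF lipschitz_W[OF valid_state_Fopen[OF assms(1)]]]
  show ?thesis
    unfolding capped_value_def using assms(3)
    by (intro mix_integral_mono[OF finite_mixture_type_law[OF assms(1,2)] lip lip] W_mono_fuel
        valid_state_Fopen[OF assms(1)])
qed

lemma Fopen_own_le_capped:
  assumes valid: "valid_state C P" and j: "j \<in> C \<union> dom P"
  shows "Fopen_value k C P y j \<le> capped_value (Suc k) C P j \<sigma> y + option_value j (P j) \<sigma>"
proof -
  have "Fopen_value k C P y j
      \<le> - cF j + (capped_value k C P j \<sigma> y + mix_integral (type_law j (P j)) (K j) (\<lambda>v. max 0 (v - \<sigma>)))"
    unfolding Fopen_value_def capped_value_def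
    using mix_integral_le_capped_plus_excess[OF finite_mixture_type_law[OF valid j]
        lipschitz_W[OF valid_state_Fopen[OF valid]]] by simp
  then show ?thesis
    using capped_value_mono_fuel[OF valid j, of k "Suc k" \<sigma> y]
      Fopen_excess_le_option_value[of j "P j" \<sigma>] by linarith
qed

lemma Popen_own_le_capped:
  assumes valid: "valid_state C P" and j: "j \<in> C"
    and IH: "\<And>C P y. valid_state C P \<Longrightarrow> j \<in> C \<union> dom P \<Longrightarrow>
      W k C P y \<le> capped_value k C P j \<sigma> y + option_value j (P j) \<sigma>"
  shows "Popen_value k C P y j \<le> capped_value (Suc k) C P j \<sigma> y + option_value j (P j) \<sigma>"
proof -
  have Pj: "P j = None" using valid_state_closed[OF valid j] by simp
  have fin: "finite (set_pmf (Q j))" by (rule finite_types[OF valid j])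
  have upd: "P(j := None) = P" using Pj by (simp add: fun_upd_idem)
  have "W k (C - {j}) (P(j \<mapsto> t)) y
      \<le> capped_value k (C - {j}) (P(j \<mapsto> t)) j \<sigma> y + option_value j (Some t) \<sigma>"
    if "t \<in> set_pmf (Q j)" for t
  proof -
    have "j \<in> (C - {j}) \<union> dom (P(j \<mapsto> t))" by simp
    from IH[OF valid_state_Popen[OF valid j that] this] show ?thesis unfolding fun_upd_same .
  qed
  then have "(\<integral>t. W k (C - {j}) (P(j \<mapsto> t)) y \<partial>Q j)
      \<le> (\<integral>t. (\<integral>u. W k (C - {j}) P (max y (min u \<sigma>)) \<partial>K j t) + option_value j (Some t) \<sigma> \<partial>Q j)"
    by (intro pmf_integral_mono[OF fin]) (simp add: capped_value_def type_law_def upd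
        mix_integral_return_pmf Diff_insert_absorb)
  also have "\<dots> = capped_value k C P j \<sigma> y + (\<integral>t. option_value j (Some t) \<sigma> \<partial>Q j)"
    by (simp add: pmf_integral_add[OF fin] capped_value_def mix_integral_def type_law_def Pj upd)
  finally show ?thesis
    using capped_value_mono_fuel[OF valid _, of j k "Suc k" \<sigma> y] j Pj
    unfolding Popen_value_def by auto
qed

lemma Fopen_other_le_capped:
  assumes valid: "valid_state C P" and j: "j \<in> C \<union> dom P" and i: "i \<in> C \<union> dom P" and ij: "i \<noteq> j"
    and IH: "\<And>C P y. valid_state C P \<Longrightarrow> j \<in> C \<union> dom P \<Longrightarrow>
      W k C P y \<le> capped_value k C P j \<sigma> y + option_value j (P j) \<sigma>"
  shows "Fopen_value k C P y i \<le> capped_value (Suc k) C P j \<sigma> y + option_value j (P j) \<sigma>"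
proof -
  define C' P' where "C' = C - {j}" and "P' = P(j := None)"
  have valid': "valid_state C' P'" and i': "i \<in> C' \<union> dom P'"
    using valid_state_Fopen[OF valid] i ij by (auto simp: C'_def P'_def)
  note mix_i = finite_mixture_type_law[OF valid i] and mix_j = finite_mixture_type_law[OF valid j]
  have swap: "C - {i} - {j} = C' - {i}" "(P(i := None))(j := None) = P'(i := None)" "P' i = P i"
    using ij by (auto simp: C'_def P'_def fun_upd_twist)
  have j': "j \<in> (C - {i}) \<union> dom (P(i := None))" and Pj: "(P(i := None)) j = P j"
    using j ij by auto
  have "W k (C - {i}) (P(i := None)) z
      \<le> mix_integral (type_law j (P j)) (K j) (\<lambda>u. W k (C' - {i}) (P'(i := None)) (max z (min u \<sigma>)))
        + option_value j (P j) \<sigma>" for z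
    using IH[OF valid_state_Fopen[OF valid] j', of z] ij unfolding Pj
    by (simp add: capped_value_def swap not_sym[OF ij])
  then have "Fopen_value k C P y i \<le> mix_integral (type_law j (P j)) (K j)
      (\<lambda>u. Fopen_value k C' P' (max y (min u \<sigma>)) i) + option_value j (P j) \<sigma>"
    unfolding Fopen_value_def swap(3)
    by (rule Fopen_commute_capping[OF mix_i mix_j lipschitz_W[OF valid_state_Fopen[OF valid]]
          lipschitz_W[OF valid_state_Fopen[OF valid']]])
  also have "\<dots> \<le> capped_value (Suc k) C P j \<sigma> y + option_value j (P j) \<sigma>"
  proof -
    have "1-lipschitz_on UNIV (\<lambda>y. Fopen_value k C' P' y i)"
      by (rule lipschitz_Fopen_value[OF valid' i' lipschitz_W[OF valid_state_Fopen[OF valid']]])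
    from mix_integral_mono[OF mix_j lipschitz_on_compose_max_min(3)[OF this]
        lipschitz_on_compose_max_min(3)[OF lipschitz_W[OF valid']] W_Suc_ge(2)[OF valid' i']]
    show ?thesis unfolding capped_value_def C'_def[symmetric] P'_def[symmetric] by simp
  qed
  finally show ?thesis .
qed

lemma Popen_other_le_capped:
  assumes valid: "valid_state C P" and j: "j \<in> C \<union> dom P" and i: "i \<in> C" and ij: "i \<noteq> j"
    and IH: "\<And>C P y. valid_state C P \<Longrightarrow> j \<in> C \<union> dom P \<Longrightarrow>
      W k C P y \<le> capped_value k C P j \<sigma> y + option_value j (P j) \<sigma>"
  shows "Popen_value k C P y i \<le> capped_value (Suc k) C P j \<sigma> y + option_value j (P j) \<sigma>"
proof -
  define C' P' where "C' = C - {j}" and "P' = P(j := None)"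
  have valid': "valid_state C' P'" and i': "i \<in> C'"
    using valid_state_Fopen[OF valid] i ij by (auto simp: C'_def P'_def)
  note mix_j = finite_mixture_type_law[OF valid j]
  have swap: "C - {i} - {j} = C' - {i}" "(P(i \<mapsto> t))(j := None) = P'(i \<mapsto> t)" for t
    using ij by (auto simp: C'_def P'_def fun_upd_twist)
  have lip: "1-lipschitz_on UNIV (W k (C' - {i}) (P'(i \<mapsto> t)))" if "t \<in> set_pmf (Q i)" for t
    by (rule lipschitz_W[OF valid_state_Popen[OF valid' i' that]])
  have "Popen_value k C P y i \<le> mix_integral (type_law j (P j)) (K j)
      (\<lambda>u. Popen_value k C' P' (max y (min u \<sigma>)) i) + option_value j (P j) \<sigma>"
    unfolding Popen_value_def
  proof (rule Popen_commute_capping[OF finite_types[OF valid i] mix_j lip])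
    fix t z assume t: "t \<in> set_pmf (Q i)"
    have j': "j \<in> (C - {i}) \<union> dom (P(i \<mapsto> t))" and Pj: "(P(i \<mapsto> t)) j = P j"
      using j ij by auto
    show "W k (C - {i}) (P(i \<mapsto> t)) z
      \<le> mix_integral (type_law j (P j)) (K j) (\<lambda>u. W k (C' - {i}) (P'(i \<mapsto> t)) (max z (min u \<sigma>)))
        + option_value j (P j) \<sigma>"
      using IH[OF valid_state_Popen[OF valid i t] j', of z] unfolding Pj
      by (simp add: capped_value_def swap not_sym[OF ij])
  qed
  also have "\<dots> \<le> capped_value (Suc k) C P j \<sigma> y + option_value j (P j) \<sigma>"
  proof -
    have "1-lipschitz_on UNIV (\<lambda>y. Popen_value k C' P' y i)"
      by (rule lipschitz_Popen_value[OF valid' i' lip])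
    from mix_integral_mono[OF mix_j lipschitz_on_compose_max_min(3)[OF this]
        lipschitz_on_compose_max_min(3)[OF lipschitz_W[OF valid']] W_Suc_ge(3)[OF valid' i']]
    show ?thesis unfolding capped_value_def C'_def[symmetric] P'_def[symmetric] by simp
  qed
  finally show ?thesis .
qed

theorem W_le_capped_value:
  assumes "valid_state C P" "j \<in> C \<union> dom P"
  shows "W n C P y \<le> capped_value n C P j \<sigma> y + option_value j (P j) \<sigma>"
  using assms
proof (induction n arbitrary: C P y)
  case 0
  then show ?case
    using capped_value_ge[OF 0, where n=0 and \<sigma>=\<sigma> and y=y] option_value_nonneg[of j "P j" \<sigma>] by simp
next
  case (Suc k)
  note valid = Suc.prems(1) and j = Suc.prems(2)
  show ?case
    unfolding W_Suc_le_iff[OF valid]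
  proof (intro conjI ballI)
    show "y \<le> capped_value (Suc k) C P j \<sigma> y + option_value j (P j) \<sigma>"
      using capped_value_ge[OF valid j, where n="Suc k" and \<sigma>=\<sigma> and y=y]
        option_value_nonneg[of j "P j" \<sigma>] by linarith
  next
    fix i assume "i \<in> C \<union> dom P"
    then show "Fopen_value k C P y i \<le> capped_value (Suc k) C P j \<sigma> y + option_value j (P j) \<sigma>"
      using Fopen_own_le_capped[OF valid j] Fopen_other_le_capped[OF valid j _ _ Suc.IH]
      by (cases "i = j") auto
  next
    fix i assume "i \<in> C"
    then show "Popen_value k C P y i \<le> capped_value (Suc k) C P j \<sigma> y + option_value j (P j) \<sigma>"
      using Popen_own_le_capped[OF valid _ Suc.IH] Popen_other_le_capped[OF valid j _ _ Suc.IH]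
      by (cases "i = j") auto
  qed
qed

lemma W_no_boxes: "W n {} Map.empty y = y"
proof (cases n)
  case (Suc m)
  have "valid_state {} Map.empty" by (simp add: valid_state_def)
  then show ?thesis using Suc W_Suc[of "{}" Map.empty m y] by simp
qed simp

lemma capped_value_at_level:
  assumes "valid_state C P" "j \<in> C \<union> dom P"
  shows "capped_value n C P j z z = W n (C - {j}) (P(j := None)) z"
  using mix_integral_const[OF finite_mixture_type_law[OF assms]] by (simp add: capped_value_def)

lemma W_eq_if_option_values_vanish:
  assumes "valid_state C P" and "\<And>j. j \<in> C \<union> dom P \<Longrightarrow> option_value j (P j) z = 0"
  shows "W n C P z = z"
  using assms
proof (induction "card (C \<union> dom P)" arbitrary: C P)
  case 0
  then have "C = {}" "P = Map.empty" using valid_state_finite[OF 0(2)] by auto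
  then show ?case by (simp add: W_no_boxes)
next
  case (Suc c)
  have "C \<union> dom P \<noteq> {}" using Suc.hyps(2) by auto
  then obtain j where j: "j \<in> C \<union> dom P" by blast
  have valid': "valid_state (C - {j}) (P(j := None))" by (rule valid_state_Fopen[OF Suc.prems(1)])
  have "C - {j} \<union> dom (P(j := None)) = (C \<union> dom P) - {j}" by auto
  then have card': "c = card (C - {j} \<union> dom (P(j := None)))"
    using Suc.hyps(2) j valid_state_finite[OF Suc.prems(1)] by simp
  have "W n C P z \<le> W n (C - {j}) (P(j := None)) z"
    using W_le_capped_value[OF Suc.prems(1) j, of n z z] Suc.prems(2)[OF j]
    by (simp add: capped_value_at_level[OF Suc.prems(1) j])
  also have "\<dots> = z"
    using Suc.prems(2) by (intro Suc.hyps(1)[OF card' valid']) auto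
  finally show ?case using W_ge[OF Suc.prems(1)] by (rule antisym)
qed

lemma Fopen_value_eq_capped_value:
  assumes valid: "valid_state C P" and j: "j \<in> C \<union> dom P" and y: "y \<le> \<sigma>"
    and stop: "\<And>x. \<sigma> \<le> x \<Longrightarrow> W n (C - {j}) (P(j := None)) x = x"
  shows "Fopen_value n C P y j
    = capped_value n C P j \<sigma> y - cF j + mix_integral (type_law j (P j)) (K j) (\<lambda>v. max 0 (v - \<sigma>))"
proof -
  let ?w = "W n (C - {j}) (P(j := None))"
  have "?w (max y v) = ?w (max y (min v \<sigma>)) + max 0 (v - \<sigma>)" for v
  proof (cases "v \<le> \<sigma>")
    case False
    then show ?thesis using y stop[of v] stop[of \<sigma>] by (simp add: max_def min_def)
  qed simp
  then have split: "(\<lambda>v. ?w (max y v)) = (\<lambda>v. ?w (max y (min v \<sigma>)) + max 0 (v - \<sigma>))" by (rule ext)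
  have lip: "1-lipschitz_on UNIV (\<lambda>v. ?w (max y (min v \<sigma>)))"
    by (rule lipschitz_on_compose_max_min(3)[OF lipschitz_W[OF valid_state_Fopen[OF valid]]])
  show ?thesis
    unfolding Fopen_value_def capped_value_def split
    using mix_integral_add[OF finite_mixture_type_law[OF valid j] lip lipschitz_on_excess] by simp
qed

lemma pb_value_Fopen_eq_Fopen_value:
  assumes "valid_state C P" "i \<in> C"
  shows "pb_value_Fopen Q K cF cP C P y i = Fopen_value (fuel (C - {i}) P) C P y i"
proof -
  have "P i = None" "P(i := None) = P" using valid_state_closed[OF assms] by (auto simp: fun_upd_idem)
  then show ?thesis
    unfolding pb_value_Fopen_def pb_value_def Fopen_value_def fuel_def type_law_def mix_integral_def
    by simp
qed

lemma pb_value_Fopen_le_pb_value: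
  assumes valid: "valid_state C P" and i: "i \<in> C"
  shows "pb_value_Fopen Q K cF cP C P y i \<le> pb_value Q K cF cP C P y"
proof -
  have i': "i \<in> C \<union> dom P" and "P(i := None) = P"
    using i valid_state_closed[OF valid i] by (auto simp: fun_upd_idem)
  then have fuel: "Suc (fuel (C - {i}) P) \<le> fuel C P" using fuel_Fopen[OF valid i'] by simp
  have "Fopen_value (fuel (C - {i}) P) C P y i \<le> W (Suc (fuel (C - {i}) P)) C P y"
    by (rule W_Suc_ge(2)[OF valid i'])
  also have "\<dots> \<le> W (fuel C P) C P y" by (rule W_mono_fuel[OF valid fuel])
  also have "\<dots> = pb_value Q K cF cP C P y" by (rule W_eq_pb_value[OF valid order_refl])
  finally show ?thesis unfolding pb_value_Fopen_eq_Fopen_value[OF valid i] .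
qed

end

section \<open>Thresholds\<close>

locale pandora_thresholds = pandora Q K cF cP B for Q :: "'b \<Rightarrow> 't pmf" and K cF cP B +
  fixes sF sP :: "'b \<Rightarrow> real" and sFt :: "'b \<Rightarrow> 't \<Rightarrow> real"
  assumes thrF: "\<And>b. b \<in> B \<Longrightarrow> is_sigmaF (Q b) (K b) (cF b) (sF b)"
    and thrP: "\<And>b. b \<in> B \<Longrightarrow> is_sigmaP (Q b) (K b) (cF b) (cP b) (sP b)"
    and thrFt: "\<And>b t. b \<in> B \<Longrightarrow> t \<in> set_pmf (Q b) \<Longrightarrow> is_sigmaF_cond (K b t) (cF b) (sFt b t)"
begin

lemma option_value_Some_eq_0:
  assumes j: "j \<in> B" and t: "t \<in> set_pmf (Q j)" and le: "sFt j t \<le> \<sigma>"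
  shows "option_value j (Some t) \<sigma> = 0"
proof -
  have "finite_mean_law (K j t)" using finite_mixture_box[OF j] t by (simp add: finite_mixture_def)
  from excess_antimono[OF this le] have "(\<integral>v. max 0 (v - \<sigma>) \<partial>K j t) \<le> cF j"
    using thrFt[OF j t] by (simp add: is_sigmaF_cond_def)
  then show ?thesis by simp
qed

lemma option_value_None_eq_0:
  assumes j: "j \<in> B" and leF: "sF j \<le> \<sigma>" and leP: "sP j \<le> \<sigma>"
  shows "option_value j None \<sigma> = 0"
proof -
  have mix: "finite_mixture (Q j) (K j)" by (rule finite_mixture_box[OF j])
  then have fin: "finite (set_pmf (Q j))" and law: "\<And>t. t \<in> set_pmf (Q j) \<Longrightarrow> finite_mean_law (K j t)"
    by (auto simp: finite_mixture_def)
  have "mix_integral (Q j) (K j) (\<lambda>v. max 0 (v - \<sigma>)) \<le> mix_integral (Q j) (K j) (\<lambda>v. max 0 (v - sF j))"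
    using leF by (intro mix_integral_mono[OF mix lipschitz_on_excess lipschitz_on_excess]) auto
  also have "\<dots> = cF j" using thrF[OF j] by (simp add: is_sigmaF_def mix_integral_def)
  finally have F: "mix_integral (Q j) (K j) (\<lambda>v. max 0 (v - \<sigma>)) \<le> cF j" .
  have "(\<integral>t. option_value j (Some t) \<sigma> \<partial>Q j) \<le> (\<integral>t. max 0 (- cF j + (\<integral>v. max 0 (v - sP j) \<partial>K j t)) \<partial>Q j)"
    using excess_antimono[OF law leP] by (intro pmf_integral_mono[OF fin]) (simp add: max.coboundedI2)
  also have "\<dots> = cP j" using thrP[OF j] by (simp add: is_sigmaP_def)
  finally show ?thesis using F by simp
qed

lemma option_value_eq_0:
  assumes valid: "valid_state C P" and j: "j \<in> C \<union> dom P"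
    and closed: "j \<in> C \<Longrightarrow> sF j \<le> \<sigma> \<and> sP j \<le> \<sigma>"
    and partial: "j \<in> dom P \<Longrightarrow> sFt j (the (P j)) \<le> \<sigma>"
  shows "option_value j (P j) \<sigma> = 0"
proof (cases "P j")
  case None
  then have jC: "j \<in> C" using j by auto
  with valid have "j \<in> B" by (auto simp: valid_state_def)
  with closed[OF jC] show ?thesis unfolding None by (intro option_value_None_eq_0) auto
next
  case (Some t)
  then have jP: "j \<in> dom P" and t: "the (P j) = t" by auto
  with valid have "j \<in> B" "t \<in> set_pmf (Q j)" by (auto simp: valid_state_def)
  with partial[OF jP] t show ?thesis unfolding Some by (intro option_value_Some_eq_0) auto
qed

theorem Fopen_optimal:
  assumes valid: "valid_state C P" and not_stop: "y < pb_value Q K cF cP C P y" and i: "i \<in> C"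
    and maxC: "\<And>j. j \<in> C \<Longrightarrow> sF j \<le> sF i \<and> sP j \<le> sF i"
    and maxP: "\<And>j. j \<in> dom P \<Longrightarrow> sFt j (the (P j)) \<le> sF i"
  shows "pb_value_Fopen Q K cF cP C P y i = pb_value Q K cF cP C P y"
proof -
  have vanish: "option_value j (P j) x = 0" if "j \<in> C \<union> dom P" "sF i \<le> x" for j x
    using that maxC maxP by (intro option_value_eq_0[OF valid]) fastforce+
  have i': "i \<in> C \<union> dom P" and Pi: "P i = None" "P(i := None) = P"
    using i valid_state_closed[OF valid i] by (auto simp: fun_upd_idem)
  have valid': "valid_state (C - {i}) P" using valid_state_Fopen[OF valid, of i] Pi by simp
  have y_below: "y < sF i"
  proof (rule ccontr)
    assume "\<not> y < sF i"
    then have "W (fuel C P) C P y = y" using vanish by (intro W_eq_if_option_values_vanish[OF valid]) auto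
    then show False using not_stop W_eq_pb_value[OF valid order_refl] by simp
  qed
  have stop: "W n (C - {i}) (P(i := None)) x = x" if "sF i \<le> x" for n x
    unfolding Pi using vanish that by (intro W_eq_if_option_values_vanish[OF valid']) auto
  have fuel: "fuel (C - {i}) P \<le> fuel C P" using fuel_Fopen[OF valid i'] Pi by simp
  have excess: "mix_integral (type_law i (P i)) (K i) (\<lambda>v. max 0 (v - sF i)) = cF i"
    using thrF[OF valid_state_closed[OF valid i, THEN conjunct2]]
    by (simp add: Pi type_law_def is_sigmaF_def mix_integral_def)
  have "pb_value Q K cF cP C P y \<le> capped_value (fuel C P) C P i (sF i) y"
    using W_le_capped_value[OF valid i', of "fuel C P" y "sF i"] vanish[OF i' order_refl]
      W_eq_pb_value[OF valid order_refl] by simp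
  also have "\<dots> = capped_value (fuel (C - {i}) P) C P i (sF i) y"
    using W_eq_pb_value[OF valid'] fuel by (simp add: capped_value_def Pi)
  also have "\<dots> = Fopen_value (fuel (C - {i}) P) C P y i"
    using Fopen_value_eq_capped_value[OF valid i', of y "sF i"] y_below stop excess by simp
  also have "\<dots> = pb_value_Fopen Q K cF cP C P y i"
    by (rule pb_value_Fopen_eq_Fopen_value[OF valid i, symmetric])
  finally show ?thesis using pb_value_Fopen_le_pb_value[OF valid i] by (rule antisym[rotated])
qed

end

theorem mainTheorem3:
  fixes Q :: "'b \<Rightarrow> 't pmf" and K :: "'b \<Rightarrow> 't \<Rightarrow> real measure"
    and cF cP :: "'b \<Rightarrow> real" and B :: "'b set"
    and sF sP :: "'b \<Rightarrow> real" and sFt :: "'b \<Rightarrow> 't \<Rightarrow> real"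
    and C :: "'b set" and P :: "'b \<rightharpoonup> 't" and y :: real and i :: 'b
  assumes finB: "finite B"
    and finGamma: "\<And>b. b \<in> B \<Longrightarrow> finite (set_pmf (Q b))"
    and probK: "\<And>b t. b \<in> B \<Longrightarrow> t \<in> set_pmf (Q b) \<Longrightarrow> prob_space (K b t)"
    and borelK: "\<And>b t. b \<in> B \<Longrightarrow> t \<in> set_pmf (Q b) \<Longrightarrow> sets (K b t) = sets borel"
    and nonnegK: "\<And>b t. b \<in> B \<Longrightarrow> t \<in> set_pmf (Q b) \<Longrightarrow> AE v in K b t. 0 \<le> v"
    and intK: "\<And>b t. b \<in> B \<Longrightarrow> t \<in> set_pmf (Q b) \<Longrightarrow> integrable (K b t) (\<lambda>v. v)"
    and costs: "\<And>b. b \<in> B \<Longrightarrow> 0 < cF b \<and> 0 < cP b"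
    and thrF: "\<And>b. b \<in> B \<Longrightarrow> is_sigmaF (Q b) (K b) (cF b) (sF b)"
    and thrP: "\<And>b. b \<in> B \<Longrightarrow> is_sigmaP (Q b) (K b) (cF b) (cP b) (sP b)"
    and thrFt: "\<And>b t. b \<in> B \<Longrightarrow> t \<in> set_pmf (Q b) \<Longrightarrow> is_sigmaF_cond (K b t) (cF b) (sFt b t)"
    and state: "C \<union> dom P \<subseteq> B" "C \<inter> dom P = {}"
    and types: "\<And>j. j \<in> dom P \<Longrightarrow> the (P j) \<in> set_pmf (Q j)"
    and not_stop: "y < pb_value Q K cF cP C P y"
    and iC: "i \<in> C"
    and gapi: "sF i > sP i"
    and maxi: "\<And>j. j \<in> C \<Longrightarrow> sF j \<le> sF i \<and> sP j \<le> sF i"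
    and maxiP: "\<And>j. j \<in> dom P \<Longrightarrow> sFt j (the (P j)) \<le> sF i"
  shows "pb_value_Fopen Q K cF cP C P y i = pb_value Q K cF cP C P y"
proof -
  interpret pandora_thresholds Q K cF cP B sF sP sFt
    using finB finGamma probK borelK intK thrF thrP thrFt
    by unfold_locales (auto simp: finite_mixture_def finite_mean_law_def)
  have "valid_state C P" using state types by (auto simp: valid_state_def)
  then show ?thesis using not_stop iC maxi maxiP by (rule Fopen_optimal)
qed

end
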